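(* Let $X$ be a topological space, let $\rho:\mathcal{F}\to[\Psi]^\omega$ be a partition regular function, and let $x:\Psi\to X$ be a sequence. Then \[ \Lambda_x(\mathcal{I}_\rho)\subseteq\Lambda_x(\rho)\subseteq\Gamma_x(\rho). \]
   Context: Let $\Omega,\Psi$ be countably infinite sets, $[\Psi]^\omega$ the family of infinite subsets of $\Psi$, and $\mathcal{F}\subseteq[\Omega]^\omega$ a nonempty family with $A\setminus K\in\mathcal{F}$ for all $A\in\mathcal{F}$ and finite $K\subseteq\Omega$. A function $\rho:\mathcal{F}\to[\Psi]^\omega$ is partition regular if: (M) $E\subseteq F$ in $\mathcal{F}$ implies $\rho(E)\subseteq\rho(F)$; (R) for every $F\in\mathcal{F}$ and $A,B\subseteq\Psi$ with $\rho(F)=A\cup B$ there is $E\in\mathcal{F}$ with $\rho(E)\subseteq A$ or $\rho(E)\subseteq B$; (S) for every $F\in\mathcal{F}$ there is $E\subseteq F$, $E\in\mathcal{F}$, such that for every $a\in\rho(E)$ there is a finite $K\subseteq\Omega$ with $a\notin\rho(E\setminus K)$. $\mathcal{I}_\rho=\{S\subseteq\Psi:\forall F\in\mathcal{F}\ \rho(F)\not\subseteq S\}$ (an ideal on $\Psi$), and $\mathcal{I}_\rho^+=\mathcal{P}(\Psi)\setminus\mathcal{I}_\rho$. $\Gamma_x(\rho)$ ($\rho$-cluster points) is the set of $\eta\in X$ such that for every neighborhood $U$ of $\eta$ there is $F\in\mathcal{F}$ with $\rho(F)\subseteq\{s\in\Psi:x_s\in U\}$. $\Lambda_x(\rho)$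 ($\rho$-limit points) is the set of $\eta\in X$ for which there is $F\in\mathcal{F}$ such that for every neighborhood $U$ of $\eta$ there is a finite $K\subseteq\Omega$ with $x_s\in U$ for all $s\in\rho(F\setminus K)$. $\Lambda_x(\mathcal{I}_\rho)$ is the set of $\eta\in X$ for which there is $S\in\mathcal{I}_\rho^+$ such that the subsequence $(x_s)_{s\in S}$ converges to $\eta$ in the ordinary sense (for each neighborhood $U$ of $\eta$, $x_s\in U$ for all but finitely many $s\in S$). *)

theory Defs
  imports Complex_Main "HOL-Library.Countable_Set"
begin

definition admissible_family :: "'o set set \<Rightarrow> bool" where
  "admissible_family FF \<longleftrightarrow>
     FF \<noteq> {} \<and> (\<forall>A\<in>FF. infinite A) \<and> (\<forall>A\<in>FF. \<forall>K. finite K \<longrightarrow> A - K \<in> FF)"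

definition partition_regular :: "'o set set \<Rightarrow> ('o set \<Rightarrow> 'p set) \<Rightarrow> bool" where
  "partition_regular FF rho \<longleftrightarrow>
     admissible_family FF \<and>
     (\<forall>F\<in>FF. infinite (rho F)) \<and>
     (\<forall>E\<in>FF. \<forall>F\<in>FF. E \<subseteq> F \<longrightarrow> rho E \<subseteq> rho F) \<and>
     (\<forall>F\<in>FF. \<forall>A B. rho F = A \<union> B \<longrightarrow> (\<exists>E\<in>FF. rho E \<subseteq> A \<or> rho E \<subseteq> B)) \<and>
     (\<forall>F\<in>FF. \<exists>E\<in>FF. E \<subseteq> F \<and>
        (\<forall>a\<in>rho E. \<exists>K. finite K \<and> a \<notin> rho (E - K)))"

definition rho_ideal :: "'o set set \<Rightarrow> ('o set \<Rightarrow> 'p set) \<Rightarrow> 'p set set" where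
  "rho_ideal FF rho = {S. \<forall>F\<in>FF. \<not> rho F \<subseteq> S}"

definition rho_positive :: "'o set set \<Rightarrow> ('o set \<Rightarrow> 'p set) \<Rightarrow> 'p set set" where
  "rho_positive FF rho = UNIV - rho_ideal FF rho"

definition rho_cluster_points ::
  "'o set set \<Rightarrow> ('o set \<Rightarrow> 'p set) \<Rightarrow> ('p \<Rightarrow> 'x::topological_space) \<Rightarrow> 'x set" where
  "rho_cluster_points FF rho x =
     {\<eta>. \<forall>U. open U \<and> \<eta> \<in> U \<longrightarrow> (\<exists>F\<in>FF. rho F \<subseteq> {s. x s \<in> U})}"

definition rho_limit_points ::
  "'o set set \<Rightarrow> ('o set \<Rightarrow> 'p set) \<Rightarrow> ('p \<Rightarrow> 'x::topological_space) \<Rightarrow> 'x set" where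
  "rho_limit_points FF rho x =
     {\<eta>. \<exists>F\<in>FF. \<forall>U. open U \<and> \<eta> \<in> U \<longrightarrow>
            (\<exists>K. finite K \<and> (\<forall>s\<in>rho (F - K). x s \<in> U))}"

definition ideal_limit_points ::
  "'o set set \<Rightarrow> ('o set \<Rightarrow> 'p set) \<Rightarrow> ('p \<Rightarrow> 'x::topological_space) \<Rightarrow> 'x set" where
  "ideal_limit_points FF rho x =
     {\<eta>. \<exists>S\<in>rho_positive FF rho. \<forall>U. open U \<and> \<eta> \<in> U \<longrightarrow> finite {s\<in>S. x s \<notin> U}}"

end

theory Submission
  imports Defs
begin

text \<open>Given an \<open>\<I>\<^sub>\<rho>\<close>-positive set \<open>S\<close> along which \<open>x\<close> converges to \<open>\<eta>\<close>, pick \<open>F\<close> with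
  \<open>\<rho> F \<subseteq> S\<close> and shrink it by (S) to some \<open>E\<close> from which every single point of \<open>\<rho> E\<close> can be
  expelled by removing finitely many elements of \<open>\<Omega>\<close>. For a neighbourhood \<open>U\<close> of \<open>\<eta>\<close>
  only finitely many points of \<open>\<rho> E \<subseteq> S\<close> are mapped outside \<open>U\<close>; expelling all of them at
  once costs a finite union of finite sets, so \<open>E\<close> witnesses that \<open>\<eta>\<close> is a \<open>\<rho>\<close>-limit point.\<close>

lemma partition_regular_admissible:
  "partition_regular FF rho \<Longrightarrow> admissible_family FF"
  by (simp add: partition_regular_def)

lemma partition_regular_diff_finite:
  "partition_regular FF rho \<Longrightarrow> A \<in> FF \<Longrightarrow> finite K \<Longrightarrow> A - K \<in> FF"
  by (simp add: partition_regular_def admissible_family_def)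

lemma partition_regular_mono:
  "partition_regular FF rho \<Longrightarrow> E \<in> FF \<Longrightarrow> F \<in> FF \<Longrightarrow> E \<subseteq> F \<Longrightarrow> rho E \<subseteq> rho F"
  by (simp add: partition_regular_def)

lemma partition_regular_expelling_subset:
  assumes "partition_regular FF rho" and "F \<in> FF"
  obtains E where "E \<in> FF" and "E \<subseteq> F"
    and "\<And>a. a \<in> rho E \<Longrightarrow> \<exists>K. finite K \<and> a \<notin> rho (E - K)"
  using assms unfolding partition_regular_def by metis

lemma partition_regular_expel_finite:
  assumes pr: "partition_regular FF rho" and E: "E \<in> FF"
    and expel: "\<And>a. a \<in> rho E \<Longrightarrow> \<exists>K. finite K \<and> a \<notin> rho (E - K)"
    and "finite B"
  obtains K where "finite K" and "rho (E - K) \<inter> B = {}"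
proof -
  obtain KK where KK: "\<And>a. a \<in> rho E \<Longrightarrow> finite (KK a) \<and> a \<notin> rho (E - KK a)"
    using expel by metis
  define K where "K = (\<Union>a \<in> B \<inter> rho E. KK a)"
  have "finite K"
    unfolding K_def using \<open>finite B\<close> KK by auto
  have "a \<notin> rho (E - K)" if "a \<in> B" for a
  proof
    assume a: "a \<in> rho (E - K)"
    have EK: "E - K \<in> FF"
      using partition_regular_diff_finite[OF pr E \<open>finite K\<close>] .
    have aE: "a \<in> rho E"
      using a partition_regular_mono[OF pr EK E] by blast
    have "rho (E - K) \<subseteq> rho (E - KK a)"
      using KK[OF aE] \<open>a \<in> B\<close> aE
      by (intro partition_regular_mono[OF pr EK partition_regular_diff_finite[OF pr E]])
        (auto simp: K_def)
    then show False
      using a KK[OF aE] by blast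
  qed
  then show thesis
    using that \<open>finite K\<close> by blast
qed

lemma ideal_limit_points_subset_rho_limit_points:
  assumes pr: "partition_regular FF rho"
  shows "ideal_limit_points FF rho x \<subseteq> rho_limit_points FF rho x"
proof
  fix \<eta> assume "\<eta> \<in> ideal_limit_points FF rho x"
  then obtain S where "S \<in> rho_positive FF rho"
    and conv: "\<And>U. open U \<Longrightarrow> \<eta> \<in> U \<Longrightarrow> finite {s\<in>S. x s \<notin> U}"
    unfolding ideal_limit_points_def by blast
  then obtain F where F: "F \<in> FF" "rho F \<subseteq> S"
    unfolding rho_positive_def rho_ideal_def by blast
  obtain E where E: "E \<in> FF" "E \<subseteq> F"
    and expel: "\<And>a. a \<in> rho E \<Longrightarrow> \<exists>K. finite K \<and> a \<notin> rho (E - K)"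
    using partition_regular_expelling_subset[OF pr F(1)] by blast
  have rho_E: "rho E \<subseteq> S"
    using partition_regular_mono[OF pr E(1) F(1) E(2)] F(2) by blast
  have "\<exists>K. finite K \<and> (\<forall>s\<in>rho (E - K). x s \<in> U)" if U: "open U" "\<eta> \<in> U" for U
  proof -
    obtain K where "finite K" and K: "rho (E - K) \<inter> {s\<in>S. x s \<notin> U} = {}"
      by (rule partition_regular_expel_finite[OF pr E(1) expel conv[OF U]])
    have "rho (E - K) \<subseteq> rho E"
      using partition_regular_mono[OF pr partition_regular_diff_finite[OF pr E(1) \<open>finite K\<close>] E(1)]
      by blast
    then show ?thesis
      using \<open>finite K\<close> K rho_E by blast
  qed
  then show "\<eta> \<in> rho_limit_points FF rho x"
    unfolding rho_limit_points_def using E(1) by blast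
qed

lemma rho_limit_points_subset_rho_cluster_points:
  assumes "admissible_family FF"
  shows "rho_limit_points FF rho x \<subseteq> rho_cluster_points FF rho x"
proof
  fix \<eta> assume "\<eta> \<in> rho_limit_points FF rho x"
  then obtain F where "F \<in> FF"
    and lim: "\<And>U. open U \<Longrightarrow> \<eta> \<in> U \<Longrightarrow> \<exists>K. finite K \<and> (\<forall>s\<in>rho (F - K). x s \<in> U)"
    unfolding rho_limit_points_def by blast
  have "\<exists>F'\<in>FF. rho F' \<subseteq> {s. x s \<in> U}" if U: "open U" "\<eta> \<in> U" for U
  proof -
    obtain K where "finite K" and K: "\<forall>s\<in>rho (F - K). x s \<in> U"
      using lim[OF U] by blast
    have "F - K \<in> FF"
      using assms \<open>F \<in> FF\<close> \<open>finite K\<close> by (simp add: admissible_family_def)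
    then show ?thesis
      using K by blast
  qed
  then show "\<eta> \<in> rho_cluster_points FF rho x"
    unfolding rho_cluster_points_def by blast
qed

theorem proposition2p4:
  fixes FF :: "'o set set" and rho :: "'o set \<Rightarrow> 'p set"
    and x :: "'p \<Rightarrow> 'x::topological_space"
  assumes "countable (UNIV :: 'o set)" and "infinite (UNIV :: 'o set)"
    and "countable (UNIV :: 'p set)" and "infinite (UNIV :: 'p set)"
    and "partition_regular FF rho"
  shows "ideal_limit_points FF rho x \<subseteq> rho_limit_points FF rho x \<and>
         rho_limit_points FF rho x \<subseteq> rho_cluster_points FF rho x"
proof
  show "ideal_limit_points FF rho x \<subseteq> rho_limit_points FF rho x"
    using ideal_limit_points_subset_rho_limit_points[OF assms(5)] .
  show "rho_limit_points FF rho x \<subseteq> rho_cluster_points FF rho x"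
    using rho_limit_points_subset_rho_cluster_points[OF partition_regular_admissible[OF assms(5)]] .
qed

end
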